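(* Let $\Gamma$ be a connected countable graph and let $(B_n)_{n\in\mathbb N}$ satisfy $(\dagger)$. Let $u,v\in V(\Gamma)$ be such that no maximum matching misses both $u$ and $v$, but there are maximum matchings $M_u$ and $M_v$ missing $u$ and $v$ respectively. Then $M_u\oplus M_v$ contains a path of even length with end-vertices $u$ and $v$.
   Context: Condition $(\dagger)$ on $(B_n)_{n\in\mathbb N}$: each $B_n\subseteq V(\Gamma)$ is finite, $B_n\subseteq B_{n+1}$, $\bigcup_n B_n=V(\Gamma)$, and the subgraph induced on each $B_n$ is connected. A matching $M$ misses a vertex $x$ if no edge of $M$ contains $x$. The miss sequence of $M$ is $(m_n)_{n\in\mathbb N}$ with $m_n$ the number of vertices of $B_n$ missed by $M$. For matchings $M_1,M_2$ with miss sequences $(a_n),(b_n)$, write $M_1<M_2$ if there is $N$ with $a_n=b_n$ for all $n<N$ and $a_N>b_N$. A maximum matching is a matching $M$ for which no matching $M'$ satisfies $M<M'$. $S\oplus T=(S\cup T)\setminus(S\cap T)$. *)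

theory Defs
  imports Main "HOL-Library.Countable_Set"
begin

definition graph :: "'a set \<Rightarrow> 'a set set \<Rightarrow> bool" where
  "graph V E \<longleftrightarrow> (\<forall>e\<in>E. \<exists>x y. e = {x, y} \<and> x \<noteq> y \<and> x \<in> V \<and> y \<in> V)"

definition walk_in :: "'a set set \<Rightarrow> 'a list \<Rightarrow> bool" where
  "walk_in S xs \<longleftrightarrow> xs \<noteq> [] \<and> (\<forall>i. Suc i < length xs \<longrightarrow> {xs ! i, xs ! Suc i} \<in> S)"

text \<open>A path in S: a walk with pairwise distinct vertices. Its length is the number of edges.\<close>
definition path_in :: "'a set set \<Rightarrow> 'a list \<Rightarrow> bool" where
  "path_in S xs \<longleftrightarrow> walk_in S xs \<and> distinct xs"

definition induced_connected :: "'a set set \<Rightarrow> 'a set \<Rightarrow> bool" where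
  "induced_connected E A \<longleftrightarrow>
     (\<forall>x\<in>A. \<forall>y\<in>A. \<exists>xs. walk_in {e\<in>E. e \<subseteq> A} xs \<and> hd xs = x \<and> last xs = y)"

definition connected_graph :: "'a set \<Rightarrow> 'a set set \<Rightarrow> bool" where
  "connected_graph V E \<longleftrightarrow> graph V E \<and> V \<noteq> {} \<and> induced_connected E V"

definition dagger :: "'a set \<Rightarrow> 'a set set \<Rightarrow> (nat \<Rightarrow> 'a set) \<Rightarrow> bool" where
  "dagger V E B \<longleftrightarrow> (\<forall>n. finite (B n) \<and> B n \<subseteq> V \<and> B n \<subseteq> B (Suc n) \<and> induced_connected E (B n))
                    \<and> (\<Union>n. B n) = V"

definition matching :: "'a set set \<Rightarrow> 'a set set \<Rightarrow> bool" where
  "matching E M \<longleftrightarrow> M \<subseteq> E \<and> (\<forall>e\<in>M. \<forall>f\<in>M. e \<noteq> f \<longrightarrow> e \<inter> f = {})"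

definition misses :: "'a set set \<Rightarrow> 'a \<Rightarrow> bool" where
  "misses M x \<longleftrightarrow> \<not> (\<exists>e\<in>M. x \<in> e)"

definition miss_seq :: "(nat \<Rightarrow> 'a set) \<Rightarrow> 'a set set \<Rightarrow> nat \<Rightarrow> nat" where
  "miss_seq B M n = card {x \<in> B n. misses M x}"

definition match_less :: "(nat \<Rightarrow> 'a set) \<Rightarrow> 'a set set \<Rightarrow> 'a set set \<Rightarrow> bool" where
  "match_less B M1 M2 \<longleftrightarrow>
     (\<exists>N. (\<forall>n<N. miss_seq B M1 n = miss_seq B M2 n) \<and> miss_seq B M1 N > miss_seq B M2 N)"

definition maximum_matching :: "'a set set \<Rightarrow> (nat \<Rightarrow> 'a set) \<Rightarrow> 'a set set \<Rightarrow> bool" where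
  "maximum_matching E B M \<longleftrightarrow> matching E M \<and> \<not> (\<exists>M'. matching E M' \<and> match_less B M M')"

definition sym_diff :: "'b set \<Rightarrow> 'b set \<Rightarrow> 'b set" (infixl "\<oplus>\<^sub>s" 65) where
  "S \<oplus>\<^sub>s T = (S \<union> T) - (S \<inter> T)"

end

theory Submission
  imports Defs
begin

text \<open>
  Let \<open>D = Mu \<oplus> Mv\<close> and let \<open>R\<close> be the set of vertices reachable from \<open>u\<close> along edges of \<open>D\<close>.
  If \<open>v \<in> R\<close>, a walk from \<open>u\<close> to \<open>v\<close> in \<open>D\<close> shortens to a path; its edges alternate between \<open>Mv\<close> and \<open>Mu\<close>, and
  since \<open>Mu\<close> misses \<open>u\<close> and \<open>Mv\<close> misses \<open>v\<close> it starts with an \<open>Mv\<close>-edge and ends with an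
  \<open>Mu\<close>-edge, so it has an even number of edges.
  If \<open>v \<notin> R\<close>, then \<open>R\<close> is closed under \<open>D\<close>, and exchanging \<open>Mu\<close> and \<open>Mv\<close> on the \<open>D\<close>-edges
  meeting \<open>R\<close> turns either matching into a matching that agrees with the other one inside \<open>R\<close>
  and with itself outside. Maximality of both forces the numbers of vertices of \<open>B n\<close> missed
  inside \<open>R\<close> to coincide for all \<open>n\<close>, so the exchanged \<open>Mv\<close> is again a maximum matching; it
  misses \<open>u\<close> (like \<open>Mu\<close>) and \<open>v\<close> (like \<open>Mv\<close>), which is excluded.
\<close>

lemma walk_in_Cons_Cons: "walk_in S (x # y # ys) \<longleftrightarrow> {x, y} \<in> S \<and> walk_in S (y # ys)"
proof
  assume walk: "walk_in S (x # y # ys)"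
  have "{(y # ys) ! i, (y # ys) ! Suc i} \<in> S" if "Suc i < length (y # ys)" for i
    using walk that unfolding walk_in_def by (metis Suc_less_eq length_Cons nth_Cons_Suc)
  then show "{x, y} \<in> S \<and> walk_in S (y # ys)"
    using walk unfolding walk_in_def by force
next
  assume "{x, y} \<in> S \<and> walk_in S (y # ys)"
  then show "walk_in S (x # y # ys)"
    unfolding walk_in_def by (auto simp: less_Suc_eq_0_disj)
qed

lemma walk_in_snoc:
  assumes "walk_in S xs" and "{last xs, y} \<in> S"
  shows "walk_in S (xs @ [y])"
  unfolding walk_in_def
proof (intro conjI allI impI)
  fix i assume i: "Suc i < length (xs @ [y])"
  show "{(xs @ [y]) ! i, (xs @ [y]) ! Suc i} \<in> S"
  proof (cases "Suc i < length xs")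
    case True
    then show ?thesis using assms(1) unfolding walk_in_def by (simp add: nth_append)
  next
    case False
    then have "i = length xs - 1" "Suc i = length xs" using i by simp_all
    moreover have "xs \<noteq> []" using assms(1) unfolding walk_in_def by blast
    ultimately show ?thesis using assms(2) by (simp add: nth_append last_conv_nth)
  qed
qed simp

lemma walk_in_appendD2:
  assumes "walk_in S (xs @ ys)" and "ys \<noteq> []"
  shows "walk_in S ys"
  unfolding walk_in_def
proof (intro conjI allI impI)
  fix i assume "Suc i < length ys"
  then have "Suc (length xs + i) < length (xs @ ys)" by simp
  then have "{(xs @ ys) ! (length xs + i), (xs @ ys) ! Suc (length xs + i)} \<in> S"
    using assms(1) unfolding walk_in_def by blast
  then show "{ys ! i, ys ! Suc i} \<in> S" by (simp add: nth_append)
qed (fact assms(2))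

text \<open>Cutting out the closed sub-walk at a repeated vertex.\<close>

lemma walk_in_imp_path_in:
  assumes "walk_in S xs"
  shows "\<exists>ys. path_in S ys \<and> hd ys = hd xs \<and> last ys = last xs"
  using assms
proof (induction xs)
  case Nil
  then show ?case by (simp add: walk_in_def)
next
  case (Cons x xs)
  show ?case
  proof (cases xs)
    case Nil
    then show ?thesis by (intro exI[of _ "[x]"]) (simp add: path_in_def walk_in_def)
  next
    case (Cons y zs)
    have edge: "{x, y} \<in> S" and walk: "walk_in S xs"
      using Cons.prems Cons walk_in_Cons_Cons by metis+
    obtain ys where ys: "path_in S ys" "hd ys = hd xs" "last ys = last xs"
      using Cons.IH walk by blast
    show ?thesis
    proof (cases "x \<in> set ys")
      case True
      then obtain p q where pq: "ys = p @ x # q" by (meson split_list)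
      have "path_in S (x # q)"
        using ys(1) pq walk_in_appendD2[of S p "x # q"] by (simp add: path_in_def)
      moreover have "last (x # q) = last (x # xs)"
        using ys(3) pq Cons by (cases q) auto
      ultimately show ?thesis by (intro exI[of _ "x # q"]) simp
    next
      case False
      have "ys = y # tl ys"
        using ys(1,2) Cons by (cases ys) (auto simp: path_in_def walk_in_def)
      then have "path_in S (x # ys)"
        using edge ys(1) False walk_in_Cons_Cons[of S x y "tl ys"] by (simp add: path_in_def)
      moreover have "last (x # ys) = last (x # xs)"
        using ys Cons by (auto simp: path_in_def walk_in_def)
      ultimately show ?thesis by (intro exI[of _ "x # ys"]) simp
    qed
  qed
qed

lemma sym_diff_iff: "e \<in> S \<oplus>\<^sub>s T \<longleftrightarrow> (e \<in> S \<longleftrightarrow> e \<notin> T)"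
  by (auto simp: sym_diff_def)

lemma sym_diff_commute: "S \<oplus>\<^sub>s T = T \<oplus>\<^sub>s S"
  by (auto simp: sym_diff_def)

lemma matching_disjointD: "matching E M \<Longrightarrow> e \<in> M \<Longrightarrow> f \<in> M \<Longrightarrow> e \<inter> f \<noteq> {} \<Longrightarrow> e = f"
  unfolding matching_def by blast

lemma path_in_sym_diff_alternates:
  assumes path: "path_in (M \<oplus>\<^sub>s M') xs" and "matching E M" "matching E M'"
    and i: "Suc (Suc i) < length xs"
  shows "{xs ! Suc i, xs ! Suc (Suc i)} \<in> M' \<longleftrightarrow> {xs ! i, xs ! Suc i} \<notin> M'"
proof -
  let ?e = "{xs ! i, xs ! Suc i}" and ?f = "{xs ! Suc i, xs ! Suc (Suc i)}"
  have "?e \<in> M \<oplus>\<^sub>s M'" "?f \<in> M \<oplus>\<^sub>s M'"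
    using path i unfolding path_in_def walk_in_def by auto
  moreover have "?e \<noteq> ?f"
    using path i by (auto simp: path_in_def doubleton_eq_iff nth_eq_iff_index_eq)
  moreover have "?e \<inter> ?f \<noteq> {}" by simp
  ultimately show ?thesis
    using assms(2,3) matching_disjointD by (metis sym_diff_iff)
qed

lemma path_in_sym_diff_even_length:
  assumes path: "path_in (M \<oplus>\<^sub>s M') xs" and M: "matching E M" and M': "matching E M'"
    and "misses M (hd xs)" and "misses M' (last xs)"
  shows "even (length xs - 1)"
proof (cases "length xs \<ge> 2")
  case True
  have alternating: "{xs ! i, xs ! Suc i} \<in> M' \<longleftrightarrow> even i" if "Suc i < length xs" for i
    using that
  proof (induction i)
    case 0
    then have "{xs ! 0, xs ! Suc 0} \<in> M \<oplus>\<^sub>s M'" and "xs ! 0 = hd xs"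
      using path by (auto simp: path_in_def walk_in_def hd_conv_nth)
    then show ?case using \<open>misses M (hd xs)\<close> by (auto simp: misses_def sym_diff_iff)
  next
    case (Suc i)
    then show ?case using path_in_sym_diff_alternates[OF path M M'] by simp
  qed
  define k where "k = length xs - 2"
  have k: "Suc k < length xs" "Suc k = length xs - 1"
    using True by (auto simp: k_def)
  then have "xs ! Suc k = last xs"
    by (metis last_conv_nth list.size(3) not_less_zero)
  then have "{xs ! k, xs ! Suc k} \<notin> M'"
    using \<open>misses M' (last xs)\<close> by (auto simp: misses_def)
  then have "even (Suc k)" using alternating[OF k(1)] by simp
  then show ?thesis unfolding k(2) .
next
  case False
  then show ?thesis by simp
qed

definition reachable :: "'a set set \<Rightarrow> 'a \<Rightarrow> 'a set" where
  "reachable S u = {y. \<exists>xs. walk_in S xs \<and> hd xs = u \<and> last xs = y}"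

definition closed_under :: "'a set set \<Rightarrow> 'a set \<Rightarrow> bool" where
  "closed_under S R \<longleftrightarrow> (\<forall>e\<in>S. e \<inter> R \<noteq> {} \<longrightarrow> e \<subseteq> R)"

lemma start_in_reachable: "u \<in> reachable S u"
  by (force simp: reachable_def walk_in_def)

lemma closed_under_reachable:
  assumes "graph V E" and "S \<subseteq> E"
  shows "closed_under S (reachable S u)"
  unfolding closed_under_def
proof (intro ballI impI subsetI)
  fix e z assume e: "e \<in> S" "e \<inter> reachable S u \<noteq> {}" and z: "z \<in> e"
  then obtain y where y: "y \<in> e" "y \<in> reachable S u" by blast
  then obtain xs where xs: "walk_in S xs" "hd xs = u" "last xs = y"
    unfolding reachable_def by blast
  show "z \<in> reachable S u"
  proof (cases "z = y")
    case True
    then show ?thesis using y(2) by simp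
  next
    case False
    have "e \<in> E" using assms(2) e(1) by blast
    then obtain a b where "e = {a, b}"
      using assms(1) unfolding graph_def by meson
    then have "e = {y, z}"
      using y(1) z False by blast
    then have "walk_in S (xs @ [z])"
      using walk_in_snoc[OF xs(1)] xs(3) e(1) by simp
    moreover have "hd (xs @ [z]) = u"
      using xs by (simp add: walk_in_def)
    ultimately show ?thesis
      unfolding reachable_def by (intro CollectI exI[of _ "xs @ [z]"]) simp
  qed
qed

text \<open>
  Keep the edges of \<open>M\<close> that avoid \<open>R\<close> and take those of \<open>M'\<close> that meet \<open>R\<close>; this is
  \<open>M \<oplus> C\<close> for the set \<open>C\<close> of edges of \<open>M \<oplus> M'\<close> meeting \<open>R\<close>.
\<close>

definition exchange_on :: "'a set \<Rightarrow> 'a set set \<Rightarrow> 'a set set \<Rightarrow> 'a set set" where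
  "exchange_on R M M' = {e \<in> M. e \<inter> R = {}} \<union> {e \<in> M'. e \<inter> R \<noteq> {}}"

lemma matching_exchange_on:
  assumes M: "matching E M" and M': "matching E M'" and closed: "closed_under (M \<oplus>\<^sub>s M') R"
  shows "matching E (exchange_on R M M')"
  unfolding matching_def
proof (intro conjI ballI impI)
  show "exchange_on R M M' \<subseteq> E"
    using M M' by (auto simp: matching_def exchange_on_def)
next
  have disjoint: "e \<inter> f = {}" if e: "e \<in> M" "e \<inter> R = {}" and f: "f \<in> M'" "f \<inter> R \<noteq> {}" for e f
  proof (cases "f \<in> M")
    case True
    then show ?thesis using matching_disjointD[OF M] e f by blast
  next
    case False
    then have "f \<subseteq> R" using closed f by (auto simp: closed_under_def sym_diff_iff)
    then show ?thesis using e by blast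
  qed
  fix e f assume "e \<in> exchange_on R M M'" "f \<in> exchange_on R M M'" and "e \<noteq> f"
  then consider "e \<in> M" "f \<in> M" | "e \<in> M'" "f \<in> M'"
    | "e \<in> M" "e \<inter> R = {}" "f \<in> M'" "f \<inter> R \<noteq> {}"
    | "f \<in> M" "f \<inter> R = {}" "e \<in> M'" "e \<inter> R \<noteq> {}"
    unfolding exchange_on_def by blast
  then show "e \<inter> f = {}"
  proof cases
    case 1
    then show ?thesis using matching_disjointD[OF M] \<open>e \<noteq> f\<close> by blast
  next
    case 2
    then show ?thesis using matching_disjointD[OF M'] \<open>e \<noteq> f\<close> by blast
  next
    case 3
    then show ?thesis by (rule disjoint)
  next
    case 4
    then show ?thesis using disjoint[of f e] by (simp add: Int_commute)
  qed
qed

lemma misses_exchange_on_inside: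
  "x \<in> R \<Longrightarrow> misses (exchange_on R M M') x \<longleftrightarrow> misses M' x"
  by (auto simp: misses_def exchange_on_def)

lemma misses_exchange_on_outside:
  assumes "closed_under (M \<oplus>\<^sub>s M') R" and "x \<notin> R"
  shows "misses (exchange_on R M M') x \<longleftrightarrow> misses M x"
proof -
  have "e \<inter> R = {}" if "e \<in> M \<oplus>\<^sub>s M'" "x \<in> e" for e
    using assms that unfolding closed_under_def by blast
  then have "e \<in> M \<longleftrightarrow> e \<in> exchange_on R M M'" if "x \<in> e" for e
    using that unfolding exchange_on_def sym_diff_iff by blast
  then show ?thesis unfolding misses_def by blast
qed

lemma miss_seq_patch:
  assumes "finite (B n)"
    and "\<And>x. x \<in> R \<Longrightarrow> misses N x \<longleftrightarrow> misses M' x"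
    and "\<And>x. x \<notin> R \<Longrightarrow> misses N x \<longleftrightarrow> misses M x"
  shows "miss_seq B N n = card ({x \<in> B n. misses M x} - R) + card ({x \<in> B n. misses M' x} \<inter> R)"
proof -
  have "{x \<in> B n. misses N x} = ({x \<in> B n. misses M x} - R) \<union> ({x \<in> B n. misses M' x} \<inter> R)"
    using assms(2,3) by blast
  moreover have "card (({x \<in> B n. misses M x} - R) \<union> ({x \<in> B n. misses M' x} \<inter> R))
      = card ({x \<in> B n. misses M x} - R) + card ({x \<in> B n. misses M' x} \<inter> R)"
    using assms(1) by (intro card_Un_disjoint) auto
  ultimately show ?thesis unfolding miss_seq_def by simp
qed

lemma first_difference:
  fixes f g :: "nat \<Rightarrow> 'b"
  assumes "f \<noteq> g"
  obtains N where "\<forall>n<N. f n = g n" and "f N \<noteq> g N"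
proof
  let ?N = "LEAST n. f n \<noteq> g n"
  have "\<exists>n. f n \<noteq> g n" using assms by blast
  then show "f ?N \<noteq> g ?N" by (rule LeastI_ex)
  show "\<forall>n<?N. f n = g n" using not_less_Least by blast
qed

text \<open>
  Exchanging \<open>M\<close> and \<open>M'\<close> on a closed set preserves maximality: if one of them missed fewer
  vertices inside \<open>R\<close> at the first index where these counts differ, moving its edges inside
  \<open>R\<close> into the other one would improve the other one.
\<close>

lemma maximum_matching_exchange_on:
  assumes max: "maximum_matching E B M" and max': "maximum_matching E B M'"
    and closed: "closed_under (M \<oplus>\<^sub>s M') R" and fin: "\<And>n. finite (B n)"
  shows "maximum_matching E B (exchange_on R M M')"
proof -
  have M: "matching E M" and M': "matching E M'"
    using max max' by (auto simp: maximum_matching_def)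
  have closed': "closed_under (M' \<oplus>\<^sub>s M) R"
    using closed by (simp add: sym_diff_commute)
  define outside where "outside K n = card ({x \<in> B n. misses K x} - R)" for K n
  define inside where "inside K n = card ({x \<in> B n. misses K x} \<inter> R)" for K n
  have seq_exchange: "miss_seq B (exchange_on R K K') n = outside K n + inside K' n"
    if "closed_under (K \<oplus>\<^sub>s K') R" for K K' n
    unfolding outside_def inside_def
    by (rule miss_seq_patch[OF fin misses_exchange_on_inside misses_exchange_on_outside[OF that]])
  have seq_self: "miss_seq B K n = outside K n + inside K n" for K n
    unfolding outside_def inside_def by (rule miss_seq_patch[OF fin]) auto
  note seqs = seq_self[of M] seq_self[of M'] seq_exchange[OF closed] seq_exchange[OF closed']
  have "inside M = inside M'"
  proof (rule ccontr)
    assume "inside M \<noteq> inside M'"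
    then obtain N where agree: "\<forall>n<N. inside M n = inside M' n" and "inside M N \<noteq> inside M' N"
      by (rule first_difference)
    then consider "inside M' N < inside M N" | "inside M N < inside M' N" by linarith
    then show False
    proof cases
      case 1
      then have "match_less B M (exchange_on R M M')"
        unfolding match_less_def using agree by (intro exI[of _ N]) (simp add: seqs)
      then show False using max matching_exchange_on[OF M M' closed] by (auto simp: maximum_matching_def)
    next
      case 2
      then have "match_less B M' (exchange_on R M' M)"
        unfolding match_less_def using agree by (intro exI[of _ N]) (simp add: seqs)
      then show False using max' matching_exchange_on[OF M' M closed'] by (auto simp: maximum_matching_def)
    qed
  qed
  then have "miss_seq B (exchange_on R M M') = miss_seq B M"
    by (simp add: seqs fun_eq_iff)
  then show ?thesis
    using max matching_exchange_on[OF M M' closed]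
    unfolding maximum_matching_def match_less_def by simp
qed

lemma even_path_if_reachable:
  assumes Mu: "matching E Mu" and Mv: "matching E Mv" and "misses Mu u" and "misses Mv v"
    and "v \<in> reachable (Mu \<oplus>\<^sub>s Mv) u"
  shows "\<exists>xs. path_in (Mu \<oplus>\<^sub>s Mv) xs \<and> hd xs = u \<and> last xs = v \<and> even (length xs - 1)"
proof -
  obtain ws where "walk_in (Mu \<oplus>\<^sub>s Mv) ws" "hd ws = u" "last ws = v"
    using assms(5) unfolding reachable_def by blast
  then obtain xs where xs: "path_in (Mu \<oplus>\<^sub>s Mv) xs" "hd xs = u" "last xs = v"
    using walk_in_imp_path_in by metis
  moreover have "even (length xs - 1)"
    using path_in_sym_diff_even_length[OF xs(1) Mu Mv] xs(2,3) assms(3,4) by simp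
  ultimately show ?thesis by blast
qed

lemma maximum_matching_misses_both_if_unreachable:
  assumes "graph V E" and "\<And>n. finite (B n)"
    and max_u: "maximum_matching E B Mu" and "misses Mu u"
    and max_v: "maximum_matching E B Mv" and "misses Mv v"
    and unreachable: "v \<notin> reachable (Mu \<oplus>\<^sub>s Mv) u"
  shows "\<exists>M. maximum_matching E B M \<and> misses M u \<and> misses M v"
proof -
  let ?R = "reachable (Mu \<oplus>\<^sub>s Mv) u"
  have "Mu \<oplus>\<^sub>s Mv \<subseteq> E"
    using max_u max_v unfolding maximum_matching_def matching_def sym_diff_def by blast
  then have "closed_under (Mu \<oplus>\<^sub>s Mv) ?R"
    by (rule closed_under_reachable[OF assms(1)])
  then have closed: "closed_under (Mv \<oplus>\<^sub>s Mu) ?R"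
    by (simp add: sym_diff_commute)
  have "maximum_matching E B (exchange_on ?R Mv Mu)"
    by (rule maximum_matching_exchange_on[OF max_v max_u closed assms(2)])
  moreover have "misses (exchange_on ?R Mv Mu) u"
    using misses_exchange_on_inside[OF start_in_reachable, where M = Mv and M' = Mu] assms(4) by simp
  moreover have "misses (exchange_on ?R Mv Mu) v"
    using misses_exchange_on_outside[OF closed unreachable] assms(6) by simp
  ultimately show ?thesis by blast
qed

theorem lemmaA3:
  fixes V :: "'a set" and E :: "'a set set" and B :: "nat \<Rightarrow> 'a set"
    and u v :: 'a and Mu Mv :: "'a set set"
  assumes "connected_graph V E" and "countable V"
    and "dagger V E B"
    and "u \<in> V" and "v \<in> V"
    and "\<not> (\<exists>M. maximum_matching E B M \<and> misses M u \<and> misses M v)"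
    and "maximum_matching E B Mu" and "misses Mu u"
    and "maximum_matching E B Mv" and "misses Mv v"
  shows "\<exists>xs. path_in (Mu \<oplus>\<^sub>s Mv) xs \<and> hd xs = u \<and> last xs = v \<and> even (length xs - 1)"
proof -
  have graph: "graph V E" using assms(1) by (simp add: connected_graph_def)
  have fin: "\<And>n. finite (B n)" using assms(3) by (simp add: dagger_def)
  have reachable: "v \<in> reachable (Mu \<oplus>\<^sub>s Mv) u"
    using maximum_matching_misses_both_if_unreachable[OF graph fin assms(7-10)] assms(6) by blast
  have Mu: "matching E Mu" and Mv: "matching E Mv"
    using assms(7,9) by (auto simp: maximum_matching_def)
  show ?thesis
    by (rule even_path_if_reachable[OF Mu Mv assms(8,10) reachable])
qed

end
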